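(* Let $\mathbf A\in\mathbb R^{n\times p}$ have columns $\mathbf a_1,\dots,\mathbf a_p$ normalized to a common norm, $\|\mathbf a_k\|_2=c$ for $k=1,\dots,p$, and let $\mathbf y\in\mathbb R^n$. Let $\mathbf w$ be a weight vector as in the context and $\Delta:=\min\{w_l-w_{l+1}: l=1,\dots,p-1\}$. Let $\widehat{\mathbf x}$ be any minimizer of $$\frac12\|\mathbf A\mathbf x-\mathbf y\|_2^2+\Omega_{\mathbf w}(\mathbf x)$$ over $\mathbf x\in\mathbb R^p$. Then for every pair of columns $(i,j)$ for which $\|\mathbf y\|_2\,\|\operatorname{sign}(\widehat x_i)\mathbf a_i-\operatorname{sign}(\widehat x_j)\mathbf a_j\|_2<\Delta$, we have $|\widehat x_i|=|\widehat x_j|$.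
   Context: $\mathbf w=(w_1,\dots,w_p)\in\mathbb R^p_+$ satisfies $w_1\ge w_2\ge\cdots\ge w_p\ge0$ and $w_1>0$. The ordered weighted $\ell_1$ (OWL) norm is $\Omega_{\mathbf w}(\mathbf x)=\sum_{i=1}^p w_i|x|_{[i]}$, where $|x|_{[i]}$ denotes the $i$-th largest component of $\mathbf x$ in magnitude. $\operatorname{sign}$ denotes the sign function. *)

theory Defs
  imports "HOL-Analysis.Analysis"
begin

text \<open>Vectors in R^m are represented as functions nat => real, of which only the
  entries with index < m matter (0-based indexing). A matrix in R^(n x p) is
  a function nat => nat => real, entry (r,k) = A r k, r < n, k < p.\<close>

definition vnorm2 :: "nat \<Rightarrow> (nat \<Rightarrow> real) \<Rightarrow> real" where
  "vnorm2 m v = sqrt (\<Sum>r<m. (v r)\<^sup>2)"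

definition matvec :: "nat \<Rightarrow> nat \<Rightarrow> (nat \<Rightarrow> nat \<Rightarrow> real) \<Rightarrow> (nat \<Rightarrow> real) \<Rightarrow> (nat \<Rightarrow> real)" where
  "matvec n p A x = (\<lambda>r. if r < n then (\<Sum>k<p. A r k * x k) else 0)"

text \<open>Magnitudes of x_0..x_(p-1) sorted in decreasing order; the i-th entry is |x|_[i+1].\<close>
definition sorted_abs_desc :: "nat \<Rightarrow> (nat \<Rightarrow> real) \<Rightarrow> real list" where
  "sorted_abs_desc p x = rev (sort (map (\<lambda>k. \<bar>x k\<bar>) [0..<p]))"

definition owl :: "nat \<Rightarrow> (nat \<Rightarrow> real) \<Rightarrow> (nat \<Rightarrow> real) \<Rightarrow> real" where
  "owl p w x = (\<Sum>i<p. w i * sorted_abs_desc p x ! i)"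

definition owl_weights :: "nat \<Rightarrow> (nat \<Rightarrow> real) \<Rightarrow> bool" where
  "owl_weights p w \<longleftrightarrow> 0 < p \<and> (\<forall>i. i + 1 < p \<longrightarrow> w (i + 1) \<le> w i)
      \<and> 0 \<le> w (p - 1) \<and> 0 < w 0"

definition owl_objective :: "nat \<Rightarrow> nat \<Rightarrow> (nat \<Rightarrow> nat \<Rightarrow> real) \<Rightarrow> (nat \<Rightarrow> real)
     \<Rightarrow> (nat \<Rightarrow> real) \<Rightarrow> (nat \<Rightarrow> real) \<Rightarrow> real" where
  "owl_objective n p A y w x =
     (1/2) * (vnorm2 n (\<lambda>r. matvec n p A x r - y r))\<^sup>2 + owl p w x"

text \<open>Delta = min { w_l - w_(l+1) : l = 1..p-1 } (0-based: l = 0..p-2).\<close>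
definition owl_gap :: "nat \<Rightarrow> (nat \<Rightarrow> real) \<Rightarrow> real" where
  "owl_gap p w = Min {w l - w (l + 1) | l. l + 1 < p}"

end

theory Submission
  imports Defs
begin

(* Suppose |x_i| > |x_j| at a minimiser x, and move a small amount t of magnitude from
   coordinate i to coordinate j along the signs of x_i and x_j.  By Abel summation the OWL norm
   is a nonnegative combination, with coefficients w_l - w_(l+1) >= Delta, of the sums of the
   m largest magnitudes; none of these sums increases and the one with
   m = #{k. |x_k| >= |x_i|} drops by t, so the penalty drops by at least t Delta.  The residual
   moves by t (s_j a_j - s_i a_i), and comparing with x = 0 shows that the residual of a
   minimiser is no longer than y, so the squared loss grows by at most
   t |y| |s_i a_i - s_j a_j| + O(t^2).  Under the hypothesis the objective strictly decreases
   for small t. *)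

lemma insort_map: "insort (f x) (map f xs) = map f (insort_key f x xs)"
  by (induct xs) auto

lemma sort_map: "sort (map f xs) = map f (sort_key f xs)"
  by (induct xs) (auto simp: insort_map)

lemma sorted_abs_desc_perm:
  obtains L where "distinct L" "set L = {..<p}" "length L = p"
    and "sorted_abs_desc p x = map (\<lambda>k. \<bar>x k\<bar>) L"
    and "\<And>k l. k \<le> l \<Longrightarrow> l < p \<Longrightarrow> \<bar>x (L ! l)\<bar> \<le> \<bar>x (L ! k)\<bar>"
proof -
  define f where "f = (\<lambda>k. \<bar>x k\<bar>)"
  define S where "S = sort_key f [0..<p]"
  have len: "length S = p" unfolding S_def by simp
  have mono: "\<bar>x (rev S ! l)\<bar> \<le> \<bar>x (rev S ! k)\<bar>" if "k \<le> l" "l < p" for k l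
  proof -
    have "f (S ! (p - 1 - l)) \<le> f (S ! (p - 1 - k))"
      using sorted_nth_mono[OF sorted_sort_key[of f "[0..<p]"], of "p - 1 - l" "p - 1 - k"] that len
      unfolding S_def by simp
    then show ?thesis using that len by (simp add: rev_nth f_def)
  qed
  have "sorted_abs_desc p x = map (\<lambda>k. \<bar>x k\<bar>) (rev S)"
    unfolding sorted_abs_desc_def S_def f_def by (simp add: sort_map rev_map)
  moreover have "distinct (rev S)" "set (rev S) = {..<p}"
    unfolding S_def by (auto simp: atLeast0LessThan)
  ultimately show thesis using len mono by (intro that[of "rev S"]) auto
qed

definition top_abs_sum :: "nat \<Rightarrow> (nat \<Rightarrow> real) \<Rightarrow> nat \<Rightarrow> real" where
  "top_abs_sum p x m = (\<Sum>i<m. sorted_abs_desc p x ! i)"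

lemma top_abs_sum_prefix:
  assumes "distinct L" "length L = p" "sorted_abs_desc p x = map (\<lambda>k. \<bar>x k\<bar>) L" "m \<le> p"
  shows "card ((!) L ` {..<m}) = m"
    and "top_abs_sum p x m = (\<Sum>k\<in>(!) L ` {..<m}. \<bar>x k\<bar>)"
proof -
  have inj: "inj_on ((!) L) {..<m}"
    using assms by (intro inj_onI) (simp add: nth_eq_iff_index_eq)
  show "card ((!) L ` {..<m}) = m" using card_image[OF inj] by simp
  show "top_abs_sum p x m = (\<Sum>k\<in>(!) L ` {..<m}. \<bar>x k\<bar>)"
    unfolding top_abs_sum_def assms(3) sum.reindex[OF inj] using assms by simp
qed

lemma sum_le_sum_exchange:
  fixes g :: "'a \<Rightarrow> real"
  assumes fin: "finite K" "finite T" and card: "card K = card T"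
    and exch: "\<And>a b. a \<in> K - T \<Longrightarrow> b \<in> T - K \<Longrightarrow> g a + \<delta> \<le> g b"
  shows "sum g K + of_nat (card (K - T)) * \<delta> \<le> sum g T"
proof -
  have "card (K - T) = card (T - K)"
    using fin card by (simp add: card_Diff_subset_Int inf_commute)
  then obtain h where h: "bij_betw h (K - T) (T - K)"
    using finite_same_card_bij[of "K - T" "T - K"] fin by auto
  have "sum g (K - T) + of_nat (card (K - T)) * \<delta> = (\<Sum>a\<in>K - T. g a + \<delta>)"
    by (simp add: sum.distrib)
  also have "\<dots> \<le> (\<Sum>a\<in>K - T. g (h a))"
    using exch h by (intro sum_mono) (auto simp: bij_betw_def)
  also have "\<dots> = sum g (T - K)"
    using sum.reindex_bij_betw[OF h] .
  finally have "sum g (K - T) + of_nat (card (K - T)) * \<delta> \<le> sum g (T - K)" .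
  moreover have "sum g K = sum g (K \<inter> T) + sum g (K - T)" "sum g T = sum g (K \<inter> T) + sum g (T - K)"
    using sum.Int_Diff[OF fin(1), of g T] sum.Int_Diff[OF fin(2), of g K] by (simp_all add: inf_commute)
  ultimately show ?thesis by linarith
qed

lemma sum_abs_le_top_abs_sum:
  assumes K: "K \<subseteq> {..<p}" "card K = m"
  shows "(\<Sum>k\<in>K. \<bar>x k\<bar>) \<le> top_abs_sum p x m"
proof -
  obtain L where L: "distinct L" "set L = {..<p}" "length L = p"
    "sorted_abs_desc p x = map (\<lambda>k. \<bar>x k\<bar>) L"
    "\<And>k l. k \<le> l \<Longrightarrow> l < p \<Longrightarrow> \<bar>x (L ! l)\<bar> \<le> \<bar>x (L ! k)\<bar>"
    using sorted_abs_desc_perm[of p x] by blast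
  have "m \<le> p" using K card_mono[of "{..<p}" K] by simp
  define S where "S = (!) L ` {..<m}"
  note prefix = top_abs_sum_prefix[OF L(1,3,4) \<open>m \<le> p\<close>, folded S_def]
  have exch: "\<bar>x a\<bar> + 0 \<le> \<bar>x b\<bar>" if a: "a \<in> K - S" and b: "b \<in> S - K" for a b
  proof -
    have "a \<in> set L" using a K L(2) by auto
    then obtain ia where ia: "ia < p" "a = L ! ia" using L(3) by (auto simp: in_set_conv_nth)
    have "m \<le> ia" using a ia unfolding S_def by (force simp: not_le)
    moreover obtain ib where "ib < m" "b = L ! ib" using b unfolding S_def by auto
    ultimately show ?thesis using L(5) ia by simp
  qed
  have "finite K" "finite S" using K(1) finite_subset unfolding S_def by auto
  then have "(\<Sum>k\<in>K. \<bar>x k\<bar>) + of_nat (card (K - S)) * 0 \<le> (\<Sum>k\<in>S. \<bar>x k\<bar>)"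
    by (rule sum_le_sum_exchange) (use exch K(2) prefix(1) in auto)
  then show ?thesis using prefix(2) by simp
qed

lemma top_abs_sum_attained:
  assumes "m \<le> p"
  obtains K where "K \<subseteq> {..<p}" "card K = m" "top_abs_sum p x m = (\<Sum>k\<in>K. \<bar>x k\<bar>)"
proof -
  obtain L where L: "distinct L" "set L = {..<p}" "length L = p"
    "sorted_abs_desc p x = map (\<lambda>k. \<bar>x k\<bar>) L"
    "\<And>k l. k \<le> l \<Longrightarrow> l < p \<Longrightarrow> \<bar>x (L ! l)\<bar> \<le> \<bar>x (L ! k)\<bar>"
    using sorted_abs_desc_perm[of p x] by blast
  have "(!) L ` {..<m} \<subseteq> set L" using L(3) assms by auto
  then show thesis
    using that[of "(!) L ` {..<m}"] top_abs_sum_prefix[OF L(1,3,4) assms] L(2) by simp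
qed

lemma top_abs_sum_nonneg:
  assumes "m \<le> p"
  shows "0 \<le> top_abs_sum p x m"
proof -
  obtain K where "top_abs_sum p x m = (\<Sum>k\<in>K. \<bar>x k\<bar>)"
    using top_abs_sum_attained[OF assms] by metis
  then show ?thesis by (simp add: sum_nonneg)
qed

lemma top_abs_sum_zero: "m \<le> p \<Longrightarrow> top_abs_sum p (\<lambda>_. 0) m = 0"
  by (simp add: top_abs_sum_def sorted_abs_desc_def map_replicate_const)

lemma sum_by_parts_prefix:
  fixes w g :: "nat \<Rightarrow> 'a :: comm_ring"
  shows "(\<Sum>i<q. w i * g i)
    = (\<Sum>m<q. (w m - w (m + 1)) * (\<Sum>i<m + 1. g i)) + w q * (\<Sum>i<q. g i)"
  by (induct q) (auto simp: algebra_simps)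

lemma owl_eq_top_abs_sums:
  assumes "0 < p"
  shows "owl p w x = (\<Sum>m<p - 1. (w m - w (m + 1)) * top_abs_sum p x (m + 1))
    + w (p - 1) * top_abs_sum p x p"
proof -
  obtain q where q: "p = Suc q" using assms not0_implies_Suc by blast
  show ?thesis
    unfolding owl_def top_abs_sum_def q
    using sum_by_parts_prefix[of w "\<lambda>i. sorted_abs_desc (Suc q) x ! i" q]
    by (simp add: algebra_simps)
qed

lemma owl_weights_antimono: "owl_weights p w \<Longrightarrow> m + 1 < p \<Longrightarrow> 0 \<le> w m - w (m + 1)"
  unfolding owl_weights_def by simp

lemma owl_nonneg:
  assumes "owl_weights p w"
  shows "0 \<le> owl p w x"
proof -
  have "0 < p" "0 \<le> w (p - 1)" using assms unfolding owl_weights_def by auto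
  then show ?thesis
    unfolding owl_eq_top_abs_sums[OF \<open>0 < p\<close>]
    using owl_weights_antimono[OF assms]
    by (intro add_nonneg_nonneg sum_nonneg mult_nonneg_nonneg top_abs_sum_nonneg) auto
qed

lemma owl_zero: "owl p w (\<lambda>_. 0) = 0"
proof (cases "p = 0")
  case False
  then show ?thesis by (simp add: owl_eq_top_abs_sums top_abs_sum_zero)
qed (simp add: owl_def)

lemma owl_gap_le:
  assumes "l + 1 < p"
  shows "owl_gap p w \<le> w l - w (l + 1)"
proof -
  have "{w l - w (l + 1) |l. l + 1 < p} \<subseteq> (\<lambda>l. w l - w (l + 1)) ` {..<p}" by auto
  then have "finite {w l - w (l + 1) |l. l + 1 < p}" using finite_surj by blast
  then show ?thesis unfolding owl_gap_def using assms by (intro Min_le) auto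
qed

lemma owl_decrease_of_top_abs_sums:
  assumes wts: "owl_weights p w"
    and le: "\<And>m. m \<le> p \<Longrightarrow> top_abs_sum p z m \<le> top_abs_sum p x m"
    and m0: "0 < m0" "m0 < p"
    and drop: "top_abs_sum p z m0 + t \<le> top_abs_sum p x m0" and t: "0 \<le> t"
  shows "owl p w z + t * owl_gap p w \<le> owl p w x"
proof -
  define D where "D m = (w m - w (m + 1)) * (top_abs_sum p x (m + 1) - top_abs_sum p z (m + 1))"
    for m
  have D_nonneg: "0 \<le> D m" if "m < p - 1" for m
    unfolding D_def using owl_weights_antimono[OF wts, of m] le[of "m + 1"] that by simp
  define l where "l = m0 - 1"
  have l: "l < p - 1" "l + 1 = m0" using m0 unfolding l_def by auto
  have "t * owl_gap p w \<le> t * (w l - w (l + 1))"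
    using owl_gap_le[of l p w] l t by (simp add: mult_left_mono)
  also have "\<dots> \<le> D l"
  proof -
    have "t \<le> top_abs_sum p x (l + 1) - top_abs_sum p z (l + 1)" using drop l by simp
    from mult_right_mono[OF this owl_weights_antimono[OF wts, of l]] show ?thesis
      unfolding D_def using l by (simp add: mult.commute)
  qed
  also have "\<dots> \<le> (\<Sum>m<p - 1. D m)"
    using D_nonneg l by (intro member_le_sum) auto
  also have "\<dots> \<le> (\<Sum>m<p - 1. D m) + w (p - 1) * (top_abs_sum p x p - top_abs_sum p z p)"
    using wts le[of p] unfolding owl_weights_def by simp
  also have "\<dots> = owl p w x - owl p w z"
  proof -
    have "(\<Sum>m<p - 1. D m) = (\<Sum>m<p - 1. (w m - w (m + 1)) * top_abs_sum p x (m + 1))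
        - (\<Sum>m<p - 1. (w m - w (m + 1)) * top_abs_sum p z (m + 1))"
      unfolding D_def by (simp add: right_diff_distrib sum_subtractf)
    then show ?thesis
      unfolding owl_eq_top_abs_sums[OF order.strict_trans[OF m0]] by (simp add: algebra_simps)
  qed
  finally show ?thesis by simp
qed

text \<open>The hypothesis \<open>moved\<close> below says that \<open>z\<close> arises from \<open>x\<close> by shifting
  at most \<open>t\<close> of magnitude from coordinate \<open>i\<close> to coordinate \<open>j\<close>.\<close>

lemma sum_abs_moved_le:
  fixes x z :: "nat \<Rightarrow> real"
  assumes moved: "\<And>k. k < p \<Longrightarrow> \<bar>z k\<bar> \<le> \<bar>x k\<bar> + (if k = j then t else 0) - (if k = i then t else 0)"
    and K: "K \<subseteq> {..<p}"
  shows "(\<Sum>k\<in>K. \<bar>z k\<bar>) \<le> (\<Sum>k\<in>K. \<bar>x k\<bar>) + (if j \<in> K then t else 0) - (if i \<in> K then t else 0)"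
proof -
  have fin: "finite K" using K finite_subset by blast
  have "(\<Sum>k\<in>K. \<bar>z k\<bar>) \<le> (\<Sum>k\<in>K. \<bar>x k\<bar> + (if k = j then t else 0) - (if k = i then t else 0))"
    using K by (intro sum_mono moved) auto
  also have "\<dots> = (\<Sum>k\<in>K. \<bar>x k\<bar>) + (if j \<in> K then t else 0) - (if i \<in> K then t else 0)"
    using fin by (simp add: sum.distrib sum_subtractf sum.delta)
  finally show ?thesis .
qed

lemma sum_abs_moved_le_add:
  fixes x z :: "nat \<Rightarrow> real"
  assumes "\<And>k. k < p \<Longrightarrow> \<bar>z k\<bar> \<le> \<bar>x k\<bar> + (if k = j then t else 0) - (if k = i then t else 0)"
    and "K \<subseteq> {..<p}" "0 \<le> t"
  shows "(\<Sum>k\<in>K. \<bar>z k\<bar>) \<le> (\<Sum>k\<in>K. \<bar>x k\<bar>) + t"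
proof -
  have "(if j \<in> K then t else 0) - (if i \<in> K then t else 0) \<le> t" using assms(3) by simp
  then show ?thesis using sum_abs_moved_le[OF assms(1,2)] by linarith
qed

lemma top_abs_sum_moved_le:
  assumes moved: "\<And>k. k < p \<Longrightarrow> \<bar>z k\<bar> \<le> \<bar>x k\<bar> + (if k = j then t else 0) - (if k = i then t else 0)"
    and "i < p" "0 \<le> t" "t \<le> \<bar>x i\<bar> - \<bar>x j\<bar>" "m \<le> p"
  shows "top_abs_sum p z m \<le> top_abs_sum p x m"
proof -
  obtain K where K: "K \<subseteq> {..<p}" "card K = m" "top_abs_sum p z m = (\<Sum>k\<in>K. \<bar>z k\<bar>)"
    using top_abs_sum_attained[OF \<open>m \<le> p\<close>] by blast
  show ?thesis
  proof (cases "j \<in> K \<and> i \<notin> K")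
    case True
    \<comment> \<open>swapping \<open>j\<close> for \<open>i\<close> in \<open>K\<close> absorbs the gain at \<open>j\<close>\<close>
    have fin: "finite K" using K finite_subset by blast
    define K' where "K' = insert i (K - {j})"
    have "K' \<subseteq> {..<p}" using K \<open>i < p\<close> unfolding K'_def by auto
    moreover have "card K' = m" using True fin K unfolding K'_def
      by (simp add: card.insert_remove) (metis Suc_pred card_gt_0_iff empty_iff)
    ultimately have "(\<Sum>k\<in>K'. \<bar>x k\<bar>) \<le> top_abs_sum p x m" by (rule sum_abs_le_top_abs_sum)
    moreover have "(\<Sum>k\<in>K'. \<bar>x k\<bar>) = \<bar>x i\<bar> + (\<Sum>k\<in>K. \<bar>x k\<bar>) - \<bar>x j\<bar>"
      unfolding K'_def using True fin by (simp add: sum_diff1)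
    moreover have "(\<Sum>k\<in>K. \<bar>z k\<bar>) \<le> (\<Sum>k\<in>K. \<bar>x k\<bar>) + t"
      using sum_abs_moved_le_add[OF moved K(1) \<open>0 \<le> t\<close>] .
    ultimately show ?thesis using K(3) assms(4) by linarith
  next
    case False
    then have "(if j \<in> K then t else 0) - (if i \<in> K then t else 0) \<le> 0"
      using \<open>0 \<le> t\<close> by auto
    then have "(\<Sum>k\<in>K. \<bar>z k\<bar>) \<le> (\<Sum>k\<in>K. \<bar>x k\<bar>)"
      using sum_abs_moved_le[OF moved K(1)] by linarith
    then show ?thesis using K sum_abs_le_top_abs_sum[OF K(1,2), of x] by linarith
  qed
qed

lemma top_abs_sum_moved_drop:
  assumes moved: "\<And>k. k < p \<Longrightarrow> \<bar>z k\<bar> \<le> \<bar>x k\<bar> + (if k = j then t else 0) - (if k = i then t else 0)"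
    and ij: "i < p" "j < p" and lt: "\<bar>x j\<bar> < \<bar>x i\<bar>" and t: "0 < t"
    and gap: "\<And>k. k < p \<Longrightarrow> \<bar>x k\<bar> < \<bar>x i\<bar> \<Longrightarrow> \<bar>x k\<bar> + 2 * t \<le> \<bar>x i\<bar>"
  obtains m where "0 < m" "m < p" "top_abs_sum p z m + t \<le> top_abs_sum p x m"
proof -
  define T where "T = {k. k < p \<and> \<bar>x i\<bar> \<le> \<bar>x k\<bar>}"
  have T: "T \<subseteq> {..<p}" "i \<in> T" "j \<notin> T" using ij lt unfolding T_def by auto
  then have fin: "finite T" using finite_subset by blast
  have m: "0 < card T" "card T < p"
    using T fin psubset_card_mono[of "{..<p}" T] ij by (auto simp: card_gt_0_iff)
  obtain K where K: "K \<subseteq> {..<p}" "card K = card T" "top_abs_sum p z (card T) = (\<Sum>k\<in>K. \<bar>z k\<bar>)"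
    using top_abs_sum_attained[of "card T" p z] m by auto
  have finK: "finite K" using K finite_subset by blast
  have "(\<Sum>k\<in>K. \<bar>z k\<bar>) + t \<le> (\<Sum>k\<in>T. \<bar>x k\<bar>)"
  proof (cases "K = T")
    case True
    then show ?thesis using sum_abs_moved_le[OF moved K(1)] T by simp
  next
    case False
    \<comment> \<open>every exchange of an element of \<open>T\<close> for one outside costs at least \<open>2 t\<close>\<close>
    have exch: "\<bar>x a\<bar> + 2 * t \<le> \<bar>x b\<bar>" if "a \<in> K - T" "b \<in> T - K" for a b
      using that K(1) gap[of a] unfolding T_def by force
    have "K - T \<noteq> {}"
      using False K(2) fin finK by (metis Diff_eq_empty_iff card_subset_eq)
    then have "2 * t \<le> of_nat (card (K - T)) * (2 * t)"
      using finK t by (simp add: card_gt_0_iff Suc_le_eq)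
    moreover have "(\<Sum>k\<in>K. \<bar>x k\<bar>) + of_nat (card (K - T)) * (2 * t) \<le> (\<Sum>k\<in>T. \<bar>x k\<bar>)"
      using finK fin K(2) exch by (rule sum_le_sum_exchange)
    moreover have "(\<Sum>k\<in>K. \<bar>z k\<bar>) \<le> (\<Sum>k\<in>K. \<bar>x k\<bar>) + t"
      using sum_abs_moved_le_add[OF moved K(1)] t by simp
    ultimately show ?thesis by linarith
  qed
  then show thesis
    using that m K(3) sum_abs_le_top_abs_sum[OF T(1) refl, of x] by simp
qed

lemma owl_moved_decrease:
  assumes wts: "owl_weights p w"
    and moved: "\<And>k. k < p \<Longrightarrow> \<bar>z k\<bar> \<le> \<bar>x k\<bar> + (if k = j then t else 0) - (if k = i then t else 0)"
    and ij: "i < p" "j < p" and lt: "\<bar>x j\<bar> < \<bar>x i\<bar>" and t: "0 < t"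
    and gap: "\<And>k. k < p \<Longrightarrow> \<bar>x k\<bar> < \<bar>x i\<bar> \<Longrightarrow> \<bar>x k\<bar> + 2 * t \<le> \<bar>x i\<bar>"
  shows "owl p w z + t * owl_gap p w \<le> owl p w x"
proof -
  obtain m0 where m0: "0 < m0" "m0 < p" "top_abs_sum p z m0 + t \<le> top_abs_sum p x m0"
    using top_abs_sum_moved_drop[OF moved ij lt t gap] .
  have "t \<le> \<bar>x i\<bar> - \<bar>x j\<bar>" using gap[OF ij(2) lt] t by simp
  then show ?thesis
    using owl_decrease_of_top_abs_sums[OF wts _ m0] top_abs_sum_moved_le[OF moved ij(1)] t
    by simp
qed

lemma abs_add_sgn_le:
  fixes a s :: real
  assumes "0 \<le> \<bar>a\<bar> + s"
  shows "\<bar>a + s * sgn a\<bar> \<le> \<bar>a\<bar> + s"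
proof -
  have "sgn a * (\<bar>a\<bar> + s) = sgn a * \<bar>a\<bar> + s * sgn a" by (simp add: algebra_simps)
  then have "a + s * sgn a = sgn a * (\<bar>a\<bar> + s)" by (simp add: sgn_mult_abs)
  then show ?thesis using assms by (auto simp: abs_mult abs_sgn_eq)
qed

lemma abs_sgn_move_le:
  fixes x :: "nat \<Rightarrow> real"
  assumes "i \<noteq> j" "0 \<le> t" "t \<le> \<bar>x i\<bar>"
  shows "\<bar>x k + t * ((if k = j then sgn (x j) else 0) - (if k = i then sgn (x i) else 0))\<bar>
    \<le> \<bar>x k\<bar> + (if k = j then t else 0) - (if k = i then t else 0)"
proof (cases "k = i")
  case True
  then show ?thesis using assms abs_add_sgn_le[of "x i" "- t"] by simp
next
  case False
  then show ?thesis using assms abs_add_sgn_le[of "x j" t] by (cases "k = j") simp_all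
qed

lemma exists_gap_below:
  fixes x :: "nat \<Rightarrow> real"
  assumes "j < p" "\<bar>x j\<bar> < a"
  obtains g where "0 < g" "\<And>k. k < p \<Longrightarrow> \<bar>x k\<bar> < a \<Longrightarrow> \<bar>x k\<bar> + g \<le> a"
proof -
  define M where "M = {\<bar>x k\<bar> | k. k < p \<and> \<bar>x k\<bar> < a}"
  have "M \<subseteq> (\<lambda>k. \<bar>x k\<bar>) ` {..<p}" unfolding M_def by auto
  then have fin: "finite M" using finite_surj by blast
  have "\<bar>x j\<bar> \<in> M" unfolding M_def using assms by auto
  then have "Max M \<in> M" using Max_in[OF fin] by blast
  then have "Max M < a" unfolding M_def by auto
  moreover have "\<bar>x k\<bar> \<le> Max M" if "k < p" "\<bar>x k\<bar> < a" for k
    using fin that unfolding M_def by (auto intro!: Max_ge)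
  ultimately show thesis using that[of "a - Max M"] by fastforce
qed

lemma vnorm2_eq_L2_set: "vnorm2 n v = L2_set v {..<n}"
  unfolding vnorm2_def L2_set_def ..

lemma vnorm2_nonneg: "0 \<le> vnorm2 n v"
  unfolding vnorm2_eq_L2_set by simp

lemma vnorm2_cong: "(\<And>r. r < n \<Longrightarrow> u r = v r) \<Longrightarrow> vnorm2 n u = vnorm2 n v"
  unfolding vnorm2_eq_L2_set by (rule L2_set_cong) auto

lemma vnorm2_minus_commute: "vnorm2 n (\<lambda>r. u r - v r) = vnorm2 n (\<lambda>r. v r - u r)"
  unfolding vnorm2_def by (simp add: power2_commute)

lemma vnorm2_add_scaled_le:
  "0 \<le> t \<Longrightarrow> vnorm2 n (\<lambda>r. u r + t * v r) \<le> vnorm2 n u + t * vnorm2 n v"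
  unfolding vnorm2_eq_L2_set by (simp add: L2_set_right_distrib L2_set_triangle_ineq)

lemma matvec_add_scaled:
  "matvec n p A (\<lambda>k. x k + t * v k) r = matvec n p A x r + t * matvec n p A v r"
  by (simp add: matvec_def algebra_simps sum.distrib sum_distrib_left)

lemma matvec_two_coords:
  assumes "i < p" "j < p" "r < n"
  shows "matvec n p A (\<lambda>k. (if k = j then b else 0) - (if k = i then a else 0)) r
    = b * A r j - a * A r i"
proof -
  have "matvec n p A (\<lambda>k. (if k = j then b else 0) - (if k = i then a else 0)) r
      = (\<Sum>k<p. (if k = j then b * A r k else 0) - (if k = i then a * A r k else 0))"
    unfolding matvec_def using assms(3) by (auto intro!: sum.cong simp: algebra_simps)
  then show ?thesis
    using assms(1,2) by (simp add: sum_subtractf sum.delta mult.commute)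
qed

lemma residual_le_of_owl_minimizer:
  assumes wts: "owl_weights p w"
    and minim: "\<forall>z. owl_objective n p A y w x \<le> owl_objective n p A y w z"
  shows "vnorm2 n (\<lambda>r. matvec n p A x r - y r) \<le> vnorm2 n y"
proof -
  have "vnorm2 n (\<lambda>r. matvec n p A (\<lambda>_. 0) r - y r) = vnorm2 n (\<lambda>r. - y r)"
    by (rule vnorm2_cong) (simp add: matvec_def)
  also have "\<dots> = vnorm2 n y" unfolding vnorm2_def by simp
  finally have "(vnorm2 n (\<lambda>r. matvec n p A x r - y r))\<^sup>2 + 2 * owl p w x \<le> (vnorm2 n y)\<^sup>2"
    using minim[rule_format, of "\<lambda>_. 0"] unfolding owl_objective_def owl_zero by simp
  then have "(vnorm2 n (\<lambda>r. matvec n p A x r - y r))\<^sup>2 \<le> (vnorm2 n y)\<^sup>2"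
    using owl_nonneg[OF wts, of x] by linarith
  then show ?thesis using vnorm2_nonneg by (rule power2_le_imp_le)
qed

lemma owl_objective_perturb_le:
  assumes wts: "owl_weights p w"
    and minim: "\<forall>z. owl_objective n p A y w x \<le> owl_objective n p A y w z"
    and t: "0 \<le> t"
    and Az: "\<And>r. r < n \<Longrightarrow> matvec n p A z r = matvec n p A x r + t * d r"
  shows "owl_objective n p A y w z \<le> owl_objective n p A y w x
    + t * (vnorm2 n y * vnorm2 n d + t * (vnorm2 n d)\<^sup>2 / 2) + owl p w z - owl p w x"
proof -
  define nR where "nR = vnorm2 n (\<lambda>r. matvec n p A x r - y r)"
  have "vnorm2 n (\<lambda>r. matvec n p A z r - y r) = vnorm2 n (\<lambda>r. (matvec n p A x r - y r) + t * d r)"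
    by (rule vnorm2_cong) (simp add: Az)
  also have "\<dots> \<le> nR + t * vnorm2 n d"
    unfolding nR_def using t by (rule vnorm2_add_scaled_le)
  finally have "(vnorm2 n (\<lambda>r. matvec n p A z r - y r))\<^sup>2 \<le> (nR + t * vnorm2 n d)\<^sup>2"
    by (rule power_mono[OF _ vnorm2_nonneg])
  then have "owl_objective n p A y w z \<le> (nR + t * vnorm2 n d)\<^sup>2 / 2 + owl p w z"
    unfolding owl_objective_def by simp
  also have "\<dots> = owl_objective n p A y w x
      + t * (nR * vnorm2 n d + t * (vnorm2 n d)\<^sup>2 / 2) + owl p w z - owl p w x"
    unfolding owl_objective_def nR_def by (simp add: power2_eq_square algebra_simps)
  also have "\<dots> \<le> owl_objective n p A y w x
      + t * (vnorm2 n y * vnorm2 n d + t * (vnorm2 n d)\<^sup>2 / 2) + owl p w z - owl p w x"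
  proof -
    have "nR \<le> vnorm2 n y" unfolding nR_def by (rule residual_le_of_owl_minimizer[OF wts minim])
    then have "nR * vnorm2 n d \<le> vnorm2 n y * vnorm2 n d" by (rule mult_right_mono[OF _ vnorm2_nonneg])
    then show ?thesis using t by (simp add: mult_left_mono)
  qed
  finally show ?thesis .
qed

lemma owl_minimizer_not_abs_less:
  fixes A :: "nat \<Rightarrow> nat \<Rightarrow> real" and y w x :: "nat \<Rightarrow> real"
  assumes wts: "owl_weights p w"
    and minim: "\<forall>z. owl_objective n p A y w x \<le> owl_objective n p A y w z"
    and ij: "i < p" "j < p"
    and close: "vnorm2 n y * vnorm2 n (\<lambda>r. sgn (x i) * A r i - sgn (x j) * A r j) < owl_gap p w"
  shows "\<not> \<bar>x j\<bar> < \<bar>x i\<bar>"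
proof
  assume lt: "\<bar>x j\<bar> < \<bar>x i\<bar>"
  define d where "d r = sgn (x j) * A r j - sgn (x i) * A r i" for r
  define nd where "nd = vnorm2 n d"
  define ny where "ny = vnorm2 n y"
  define \<Delta> where "\<Delta> = owl_gap p w"
  have slack: "0 < \<Delta> - ny * nd"
    using close vnorm2_minus_commute[of n "\<lambda>r. sgn (x i) * A r i" "\<lambda>r. sgn (x j) * A r j"]
    unfolding \<Delta>_def ny_def nd_def d_def by simp
  obtain g where g: "0 < g" "\<And>k. k < p \<Longrightarrow> \<bar>x k\<bar> < \<bar>x i\<bar> \<Longrightarrow> \<bar>x k\<bar> + g \<le> \<bar>x i\<bar>"
    using exists_gap_below[of j p x "\<bar>x i\<bar>"] ij(2) lt by blast
  define t where "t = min (g / 2) ((\<Delta> - ny * nd) / (nd\<^sup>2 + 1))"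
  have den: "0 < nd\<^sup>2 + 1" using zero_le_power2[of nd] by linarith
  have "0 < t" unfolding t_def using g(1) slack den by simp
  moreover have "t \<le> g / 2" unfolding t_def by (rule min.cobounded1)
  ultimately have t: "0 < t" "t \<le> g / 2" by blast+
  have t_small: "t * nd\<^sup>2 / 2 < \<Delta> - ny * nd"
  proof -
    have "t \<le> (\<Delta> - ny * nd) / (nd\<^sup>2 + 1)" unfolding t_def by simp
    then have "t * (nd\<^sup>2 + 1) \<le> \<Delta> - ny * nd"
      using den by (simp add: pos_le_divide_eq)
    then show ?thesis using t slack by (simp add: algebra_simps)
  qed
  define z where "z k = x k + t * ((if k = j then sgn (x j) else 0) - (if k = i then sgn (x i) else 0))"
    for k
  have "t \<le> \<bar>x i\<bar>" using g(2)[OF ij(2) lt] t by linarith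
  then have moved: "\<bar>z k\<bar> \<le> \<bar>x k\<bar> + (if k = j then t else 0) - (if k = i then t else 0)" for k
    unfolding z_def using lt t by (intro abs_sgn_move_le) auto
  have gap: "\<bar>x k\<bar> + 2 * t \<le> \<bar>x i\<bar>" if "k < p" "\<bar>x k\<bar> < \<bar>x i\<bar>" for k
    using g(2)[OF that] t(2) by linarith
  have "owl p w z + t * \<Delta> \<le> owl p w x"
    unfolding \<Delta>_def using owl_moved_decrease[OF wts moved ij lt t(1) gap] .
  moreover have "matvec n p A z r = matvec n p A x r + t * d r" if "r < n" for r
    unfolding z_def matvec_add_scaled using ij that by (simp add: matvec_two_coords d_def)
  ultimately have "owl_objective n p A y w z
      \<le> owl_objective n p A y w x + t * (ny * nd + t * nd\<^sup>2 / 2 - \<Delta>)"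
    using owl_objective_perturb_le[OF wts minim less_imp_le[OF t(1)]]
    unfolding ny_def nd_def by (fastforce simp: algebra_simps)
  also have "\<dots> < owl_objective n p A y w x"
    using t t_small by (simp add: mult_pos_neg)
  finally show False using minim[rule_format, of z] by simp
qed

theorem theorem2:
  fixes n p :: nat and A :: "nat \<Rightarrow> nat \<Rightarrow> real" and y w xh :: "nat \<Rightarrow> real" and c :: real
  assumes cols: "\<forall>k<p. vnorm2 n (\<lambda>r. A r k) = c"
    and wts: "owl_weights p w"
    and minim: "\<forall>x. owl_objective n p A y w xh \<le> owl_objective n p A y w x"
    and ij: "i < p" "j < p"
    and close: "vnorm2 n y * vnorm2 n (\<lambda>r. sgn (xh i) * A r i - sgn (xh j) * A r j) < owl_gap p w"
  shows "\<bar>xh i\<bar> = \<bar>xh j\<bar>"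
proof -
  have "\<not> \<bar>xh j\<bar> < \<bar>xh i\<bar>"
    using owl_minimizer_not_abs_less[OF wts minim ij close] .
  moreover have "\<not> \<bar>xh i\<bar> < \<bar>xh j\<bar>"
    using close vnorm2_minus_commute[of n "\<lambda>r. sgn (xh i) * A r i" "\<lambda>r. sgn (xh j) * A r j"]
    by (intro owl_minimizer_not_abs_less[OF wts minim ij(2,1)]) simp
  ultimately show ?thesis by linarith
qed

end
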